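(* Let $m\ge 2$, let $A$ be a real diagonal $n\times n$ matrix with $\|A\|=1$, and let $A_2,\dots,A_m$ be real symmetric $n\times n$ matrices such that $\langle A_\alpha,A_\beta\rangle=0$ for $\alpha\neq\beta$ and $\|A_2\|\geq\cdots\geq\|A_m\|$. Then \[ \sum_{\alpha=2}^m\|[A,A_\alpha]\|^2\leq \sum_{\alpha=2}^m\|A_\alpha\|^2+\|A_2\|^2 . \]
   Context: $\langle A,B\rangle=\sum_{i,j}a_{ij}b_{ij}$ is the Frobenius inner product, $\|A\|^2=\langle A,A\rangle$, and $[A,B]=AB-BA$. *)

theory Defs
  imports "HOL-Analysis.Analysis"
begin

definition frob_inner :: "real^'n::finite^'n \<Rightarrow> real^'n^'n \<Rightarrow> real" where
  "frob_inner A B = (\<Sum>i\<in>UNIV. \<Sum>j\<in>UNIV. A$i$j * B$i$j)"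

definition frob_norm :: "real^'n::finite^'n \<Rightarrow> real" where
  "frob_norm A = sqrt (frob_inner A A)"

definition commutator :: "real^'n::finite^'n \<Rightarrow> real^'n^'n \<Rightarrow> real^'n^'n" where
  "commutator A B = A ** B - B ** A"

definition is_diagonal :: "real^'n::finite^'n \<Rightarrow> bool" where
  "is_diagonal A \<longleftrightarrow> (\<forall>i j. i \<noteq> j \<longrightarrow> A$i$j = 0)"

definition is_symmetric :: "real^'n::finite^'n \<Rightarrow> bool" where
  "is_symmetric A \<longleftrightarrow> transpose A = A"

end

theory Submission
  imports Defs
begin

text \<open>Write \<open>a\<^sub>i = A\<^sub>i\<^sub>i\<close>, so that \<open>\<Sum>a\<^sub>i\<^sup>2 = 1\<close> and
  \<open>\<parallel>[A,B]\<parallel>\<^sup>2 = \<Sum>\<^sub>i\<^sub>j (a\<^sub>i - a\<^sub>j)\<^sup>2 B\<^sub>i\<^sub>j\<^sup>2\<close>. Bounding \<open>(a\<^sub>i - a\<^sub>j)\<^sup>2\<close> by \<open>1 + d\<^sub>i\<^sub>j\<close> with the excess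
  \<open>d\<^sub>i\<^sub>j = max 0 ((a\<^sub>i - a\<^sub>j)\<^sup>2 - 1)\<close> leaves the term \<open>\<Sum>\<^sub>i\<^sub>j d\<^sub>i\<^sub>j \<Sum>\<^sub>\<alpha> (B\<^sub>\<alpha>)\<^sub>i\<^sub>j\<^sup>2\<close>.
  As the \<open>B\<^sub>\<alpha>\<close> are symmetric and pairwise orthogonal with norms at most \<open>\<parallel>B\<^sub>2\<parallel>\<close>,
  Bessel's inequality against \<open>E\<^sub>i\<^sub>j + E\<^sub>j\<^sub>i\<close> gives \<open>\<Sum>\<^sub>\<alpha> (B\<^sub>\<alpha>)\<^sub>i\<^sub>j\<^sup>2 \<le> \<parallel>B\<^sub>2\<parallel>\<^sup>2/2\<close> for \<open>i \<noteq> j\<close>.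
  The pairs with \<open>(a\<^sub>i - a\<^sub>j)\<^sup>2 > 1\<close> have entries of opposite signs and any two of them
  share an index, so they form a star around a single index; along the star Cauchy-Schwarz
  bounds the total excess by 1, whence \<open>\<Sum>\<^sub>i\<^sub>j d\<^sub>i\<^sub>j \<le> 2\<close>.\<close>

lemma frob_inner_eq_inner: "frob_inner X Y = inner X Y"
  by (simp add: frob_inner_def inner_vec_def)

lemma frob_norm_eq_norm: "frob_norm X = norm X"
  by (simp add: frob_norm_def frob_inner_eq_inner norm_eq_sqrt_inner)

lemma frob_norm_power2: "(frob_norm X)^2 = (\<Sum>i\<in>UNIV. \<Sum>j\<in>UNIV. (X$i$j)^2)"
  by (simp add: frob_norm_eq_norm norm_vec_def L2_set_def sum_nonneg)

lemma Bessel_inequality: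
  fixes v :: "'i \<Rightarrow> 'a::real_inner"
  assumes "finite I" and orth: "pairwise (\<lambda>\<alpha> \<beta>. orthogonal (v \<alpha>) (v \<beta>)) I"
    and bound: "\<And>\<alpha>. \<alpha> \<in> I \<Longrightarrow> norm (v \<alpha>) \<le> t"
  shows "(\<Sum>\<alpha>\<in>I. (inner x (v \<alpha>))^2) \<le> t^2 * (norm x)^2"
proof -
  define s where "s = (\<Sum>\<alpha>\<in>I. (inner x (v \<alpha>))^2)"
  define y where "y = (\<Sum>\<alpha>\<in>I. inner x (v \<alpha>) *\<^sub>R v \<alpha>)"
  have xy: "inner x y = s"
    by (simp add: y_def s_def inner_sum_right power2_eq_square)
  have "(norm y)^2 = (\<Sum>\<alpha>\<in>I. (inner x (v \<alpha>))^2 * (norm (v \<alpha>))^2)"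
    unfolding y_def using norm_sum_Pythagorean[OF \<open>finite I\<close> pairwise_ortho_scaleR[OF orth]]
    by (simp add: power_mult_distrib)
  also have "\<dots> \<le> (\<Sum>\<alpha>\<in>I. (inner x (v \<alpha>))^2 * t^2)"
    by (intro sum_mono mult_left_mono power_mono) (auto simp: bound)
  finally have y: "(norm y)^2 \<le> t^2 * s"
    by (simp add: s_def sum_distrib_left mult.commute)
  have "s^2 \<le> (norm x)^2 * (norm y)^2"
    using Cauchy_Schwarz_ineq[of x y] by (simp add: xy power2_norm_eq_inner)
  also have "\<dots> \<le> (norm x)^2 * (t^2 * s)"
    using y by (simp add: mult_left_mono)
  finally have "s * s \<le> (t^2 * (norm x)^2) * s"
    by (simp add: power2_eq_square mult_ac)
  moreover have "s \<ge> 0" by (simp add: s_def sum_nonneg)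
  ultimately show ?thesis
    unfolding s_def[symmetric] by (cases "s = 0") (auto intro: mult_right_le_imp_le)
qed

lemma sum_power2_offdiagonal_entry_le:
  fixes B :: "'i \<Rightarrow> real^'n::finite^'n"
  assumes "finite I" and orth: "pairwise (\<lambda>\<alpha> \<beta>. orthogonal (B \<alpha>) (B \<beta>)) I"
    and sym: "\<And>\<alpha>. \<alpha> \<in> I \<Longrightarrow> transpose (B \<alpha>) = B \<alpha>"
    and bound: "\<And>\<alpha>. \<alpha> \<in> I \<Longrightarrow> norm (B \<alpha>) \<le> t"
    and "i \<noteq> j"
  shows "(\<Sum>\<alpha>\<in>I. (B \<alpha> $ i $ j)^2) \<le> t^2 / 2"
proof -
  define X :: "real^'n^'n" where "X = axis i (axis j 1) + axis j (axis i 1)"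
  have X: "inner X Y = Y$i$j + Y$j$i" for Y
    unfolding X_def inner_add_left inner_axis' by simp
  have "(norm X)^2 = 2"
    unfolding power2_norm_eq_inner using X[of X] \<open>i \<noteq> j\<close> by (simp add: X_def axis_def)
  moreover have "inner X (B \<alpha>) = 2 * B \<alpha> $ i $ j" if "\<alpha> \<in> I" for \<alpha>
  proof -
    have "B \<alpha> $ j $ i = B \<alpha> $ i $ j"
      by (metis sym[OF that] transpose_def vec_lambda_beta)
    then show ?thesis by (simp add: X)
  qed
  ultimately have "(\<Sum>\<alpha>\<in>I. (2 * B \<alpha> $ i $ j)^2) \<le> t^2 * 2"
    using Bessel_inequality[OF assms(1) orth bound, of X] by simp
  then show ?thesis
    by (simp add: power_mult_distrib sum_distrib_left[symmetric])
qed

lemma sum_power2_subset_le: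
  fixes a :: "'n::finite \<Rightarrow> real"
  assumes "(\<Sum>i\<in>UNIV. (a i)^2) \<le> 1"
  shows "(\<Sum>i\<in>S. (a i)^2) \<le> 1"
  using assms sum_mono2[of UNIV S "\<lambda>i. (a i)^2"] by simp

lemma far_pair_opposite_signs:
  fixes a :: "'n::finite \<Rightarrow> real"
  assumes "(\<Sum>i\<in>UNIV. (a i)^2) \<le> 1" and far: "(a i - a j)^2 > 1"
  shows "a i * a j < 0"
proof -
  have "i \<noteq> j" using far by auto
  then have "(a i)^2 + (a j)^2 \<le> 1"
    using sum_power2_subset_le[OF assms(1), of "{i, j}"] by simp
  then show ?thesis using far by (simp add: power2_diff)
qed

lemma far_pairs_intersect:
  fixes a :: "'n::finite \<Rightarrow> real"
  assumes unit: "(\<Sum>i\<in>UNIV. (a i)^2) \<le> 1"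
    and far_ij: "(a i - a j)^2 > 1" and far_kl: "(a k - a l)^2 > 1"
  shows "k = i \<or> k = j \<or> l = i \<or> l = j"
proof (rule ccontr)
  assume "\<not> ?thesis"
  moreover have "i \<noteq> j" "k \<noteq> l" using far_ij far_kl by auto
  ultimately have "(a i)^2 + (a j)^2 + (a k)^2 + (a l)^2 \<le> 1"
    using sum_power2_subset_le[OF unit, of "{i, j, k, l}"] by (auto simp: add.assoc)
  moreover have "(a i - a j)^2 \<le> 2 * ((a i)^2 + (a j)^2)" "(a k - a l)^2 \<le> 2 * ((a k)^2 + (a l)^2)"
    using zero_le_power2[of "a i + a j"] zero_le_power2[of "a k + a l"]
    by (simp_all add: power2_diff power2_sum)
  ultimately show False using far_ij far_kl by argo
qed

lemma far_pairs_star: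
  fixes a :: "'n::finite \<Rightarrow> real"
  assumes unit: "(\<Sum>i\<in>UNIV. (a i)^2) \<le> 1"
  obtains c where "\<And>i j. (a i - a j)^2 > 1 \<Longrightarrow> i = c \<or> j = c"
proof -
  define far where "far i j \<longleftrightarrow> (a i - a j)^2 > 1" for i j
  have far_sym: "far i j \<longleftrightarrow> far j i" for i j by (simp add: far_def power2_commute)
  have meet: "k = i \<or> k = j \<or> l = i \<or> l = j" if "far i j" "far k l" for i j k l
    using far_pairs_intersect[OF unit] that by (simp add: far_def)
  have neg: "a i * a j < 0" if "far i j" for i j
    using far_pair_opposite_signs[OF unit] that by (simp add: far_def)
  have no_triangle: False if "far p q" "far p r" "far q r" for p q r
  proof -
    have "0 \<le> (a p * a q * a r)^2" by simp
    also have "\<dots> = (a p * a q) * ((a p * a r) * (a q * a r))" by (simp add: power2_eq_square)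
    also have "\<dots> < 0"
      by (rule mult_neg_pos[OF neg[OF that(1)] mult_neg_neg[OF neg[OF that(2)] neg[OF that(3)]]])
    finally show False by simp
  qed
  have "\<exists>c. \<forall>i j. far i j \<longrightarrow> i = c \<or> j = c"
  proof (cases "\<exists>p q. far p q")
    case False then show ?thesis by auto
  next
    case True
    then obtain p q where pq: "far p q" by auto
    show ?thesis
    proof (cases "\<exists>r. r \<noteq> q \<and> far p r")
      case False
      then have "\<forall>i j. far i j \<longrightarrow> i = q \<or> j = q"
        using meet[OF pq] far_sym by metis
      then show ?thesis by blast
    next
      case True
      then obtain r where "r \<noteq> q" "far p r" by auto
      have "i = p \<or> j = p" if "far i j" for i j
        using meet[OF pq that] meet[OF \<open>far p r\<close> that] \<open>r \<noteq> q\<close> no_triangle[OF pq \<open>far p r\<close>]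
          that far_sym by metis
      then show ?thesis by blast
    qed
  qed
  then show ?thesis using that by (auto simp: far_def)
qed

lemma sum_far_excess_row_le:
  fixes a :: "'n::finite \<Rightarrow> real"
  assumes unit: "(\<Sum>i\<in>UNIV. (a i)^2) \<le> 1"
  shows "(\<Sum>j\<in>UNIV. max 0 ((a c - a j)^2 - 1)) \<le> 1"
proof -
  define J where "J = {j. (a c - a j)^2 > 1}"
  define x where "x = \<bar>a c\<bar>"
  define k where "k = real (card J)"
  define S where "S = (\<Sum>j\<in>J. \<bar>a j\<bar>)"
  define Q where "Q = (\<Sum>j\<in>J. (a j)^2)"
  have "(\<Sum>j\<in>UNIV. max 0 ((a c - a j)^2 - 1)) = (\<Sum>j\<in>J. (a c - a j)^2 - 1)"
    by (rule sum.mono_neutral_cong_right) (auto simp: J_def)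
  also have "\<dots> \<le> (\<Sum>j\<in>J. x^2 + 2 * x * \<bar>a j\<bar> + (a j)^2 - 1)"
  proof (rule sum_mono)
    fix j
    have "\<bar>a c - a j\<bar> \<le> x + \<bar>a j\<bar>" unfolding x_def by (rule abs_triangle_ineq4)
    then have "\<bar>a c - a j\<bar>^2 \<le> (x + \<bar>a j\<bar>)^2" by (rule power_mono) simp
    then show "(a c - a j)^2 - 1 \<le> x^2 + 2 * x * \<bar>a j\<bar> + (a j)^2 - 1"
      by (simp add: power2_sum)
  qed
  also have "\<dots> = k * x^2 + 2 * x * S + Q - k"
    by (simp add: sum.distrib sum_subtractf k_def S_def Q_def sum_distrib_left)
  also have "\<dots> \<le> 1"
  proof -
    have "S^2 \<le> k * Q"
      using Cauchy_Schwarz_ineq_sum[of "\<lambda>_. 1" "\<lambda>j. \<bar>a j\<bar>" J] by (simp add: S_def k_def Q_def)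
    moreover have "2 * x * S \<le> x^2 + S^2"
      using zero_le_power2[of "x - S"] by (simp add: power2_diff)
    moreover have "x^2 + Q \<le> 1"
      using sum_power2_subset_le[OF unit, of "insert c J"] by (simp add: J_def x_def Q_def)
    then have "(k + 1) * (x^2 + Q) \<le> k + 1"
      by (simp add: k_def)
    ultimately show ?thesis by (simp add: algebra_simps)
  qed
  finally show ?thesis .
qed

lemma sum_far_excess_le:
  fixes a :: "'n::finite \<Rightarrow> real"
  assumes unit: "(\<Sum>i\<in>UNIV. (a i)^2) \<le> 1"
  shows "(\<Sum>i\<in>UNIV. \<Sum>j\<in>UNIV. max 0 ((a i - a j)^2 - 1)) \<le> 2"
proof -
  obtain c where star: "\<And>i j. (a i - a j)^2 > 1 \<Longrightarrow> i = c \<or> j = c"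
    using far_pairs_star[OF unit] by blast
  define d where "d i j = max 0 ((a i - a j)^2 - 1)" for i j
  have "d i j \<le> (if i = c then d c j else 0) + (if j = c then d c i else 0)" for i j
    using star[of i j] by (cases "(a i - a j)^2 > 1") (auto simp: d_def power2_commute)
  then have "(\<Sum>i\<in>UNIV. \<Sum>j\<in>UNIV. d i j)
      \<le> (\<Sum>i\<in>UNIV. \<Sum>j\<in>UNIV. (if i = c then d c j else 0) + (if j = c then d c i else 0))"
    by (intro sum_mono)
  also have "\<dots> = 2 * (\<Sum>j\<in>UNIV. d c j)"
    by (simp add: sum.distrib) (subst sum.swap, simp)
  also have "\<dots> \<le> 2"
    using sum_far_excess_row_le[OF unit, of c] by (simp add: d_def)
  finally show ?thesis by (simp add: d_def)
qed

lemma matrix_mult_diagonal_nth: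
  fixes A B :: "real^'n::finite^'n"
  assumes "is_diagonal A"
  shows "(A ** B)$i$j = A$i$i * B$i$j" and "(B ** A)$i$j = B$i$j * A$j$j"
proof -
  have "(\<Sum>k\<in>UNIV. A$i$k * B$k$j) = (\<Sum>k\<in>UNIV. if k = i then A$i$i * B$i$j else 0)"
    by (rule sum.cong) (use assms in \<open>auto simp: is_diagonal_def\<close>)
  then show "(A ** B)$i$j = A$i$i * B$i$j" by (simp add: matrix_matrix_mult_def)
  have "(\<Sum>k\<in>UNIV. B$i$k * A$k$j) = (\<Sum>k\<in>UNIV. if k = j then B$i$j * A$j$j else 0)"
    by (rule sum.cong) (use assms in \<open>auto simp: is_diagonal_def\<close>)
  then show "(B ** A)$i$j = B$i$j * A$j$j" by (simp add: matrix_matrix_mult_def)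
qed

lemma frob_norm_commutator_diagonal:
  fixes A B :: "real^'n::finite^'n"
  assumes "is_diagonal A"
  shows "(frob_norm (commutator A B))^2 = (\<Sum>i\<in>UNIV. \<Sum>j\<in>UNIV. (A$i$i - A$j$j)^2 * (B$i$j)^2)"
  unfolding frob_norm_power2 commutator_def
  by (intro sum.cong refl)
     (simp add: matrix_mult_diagonal_nth[OF assms] power2_eq_square algebra_simps)

lemma frob_norm_diagonal:
  fixes A :: "real^'n::finite^'n"
  assumes "is_diagonal A"
  shows "(frob_norm A)^2 = (\<Sum>i\<in>UNIV. (A$i$i)^2)"
proof -
  have "(\<Sum>j\<in>UNIV. (A$i$j)^2) = (A$i$i)^2" for i
    by (subst sum.remove[of _ i]) (use assms in \<open>auto simp: is_diagonal_def\<close>)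
  then show ?thesis by (simp add: frob_norm_power2)
qed

lemma sum_frob_norm_commutator_diagonal_le:
  fixes A :: "real^'n::finite^'n" and B :: "'i \<Rightarrow> real^'n^'n"
  assumes diag: "is_diagonal A" and norm_A: "frob_norm A \<le> 1"
    and "finite I"
    and sym: "\<And>\<alpha>. \<alpha> \<in> I \<Longrightarrow> is_symmetric (B \<alpha>)"
    and orth: "pairwise (\<lambda>\<alpha> \<beta>. frob_inner (B \<alpha>) (B \<beta>) = 0) I"
    and bound: "\<And>\<alpha>. \<alpha> \<in> I \<Longrightarrow> frob_norm (B \<alpha>) \<le> t"
  shows "(\<Sum>\<alpha>\<in>I. (frob_norm (commutator A (B \<alpha>)))^2) \<le> (\<Sum>\<alpha>\<in>I. (frob_norm (B \<alpha>))^2) + t^2"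
proof -
  define a where "a i = A$i$i" for i
  define d where "d i j = max 0 ((a i - a j)^2 - 1)" for i j
  have "(frob_norm A)^2 \<le> 1"
    using norm_A by (simp add: frob_norm_eq_norm power_le_one)
  then have unit: "(\<Sum>i\<in>UNIV. (a i)^2) \<le> 1"
    by (simp add: frob_norm_diagonal[OF diag] a_def)
  have entries: "(\<Sum>\<alpha>\<in>I. (B \<alpha> $ i $ j)^2) \<le> t^2 / 2" if "i \<noteq> j" for i j
    using sum_power2_offdiagonal_entry_le[OF \<open>finite I\<close> _ _ _ that] orth sym bound
    by (simp add: pairwise_def orthogonal_def frob_inner_eq_inner frob_norm_eq_norm is_symmetric_def)
  have "(\<Sum>\<alpha>\<in>I. (frob_norm (commutator A (B \<alpha>)))^2)
      \<le> (\<Sum>\<alpha>\<in>I. \<Sum>i\<in>UNIV. \<Sum>j\<in>UNIV. (1 + d i j) * (B \<alpha> $ i $ j)^2)"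
    unfolding frob_norm_commutator_diagonal[OF diag]
    by (intro sum_mono mult_right_mono) (auto simp: a_def d_def)
  also have "\<dots> = (\<Sum>\<alpha>\<in>I. (frob_norm (B \<alpha>))^2)
      + (\<Sum>i\<in>UNIV. \<Sum>j\<in>UNIV. d i j * (\<Sum>\<alpha>\<in>I. (B \<alpha> $ i $ j)^2))"
    by (simp add: frob_norm_power2 distrib_right sum.distrib sum_distrib_left sum.swap[of _ I])
  also have "(\<Sum>i\<in>UNIV. \<Sum>j\<in>UNIV. d i j * (\<Sum>\<alpha>\<in>I. (B \<alpha> $ i $ j)^2))
      \<le> (\<Sum>i\<in>UNIV. \<Sum>j\<in>UNIV. d i j * (t^2 / 2))"
  proof (intro sum_mono)
    fix i j
    show "d i j * (\<Sum>\<alpha>\<in>I. (B \<alpha> $ i $ j)^2) \<le> d i j * (t^2 / 2)"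
    proof (cases "i = j")
      case False
      then show ?thesis by (intro mult_left_mono entries) (simp_all add: d_def)
    qed (simp add: d_def)
  qed
  also have "\<dots> = t^2 / 2 * (\<Sum>i\<in>UNIV. \<Sum>j\<in>UNIV. d i j)"
    by (simp add: sum_distrib_left sum_distrib_right mult.commute)
  also have "\<dots> \<le> t^2 / 2 * 2"
    using sum_far_excess_le[OF unit] by (intro mult_left_mono) (simp_all add: d_def)
  finally show ?thesis by simp
qed

theorem mainTheorem5:
  fixes m :: nat and A :: "real^'n::finite^'n" and B :: "nat \<Rightarrow> real^'n^'n"
  assumes "m \<ge> 2"
    and "is_diagonal A"
    and "frob_norm A = 1"
    and "\<And>\<alpha>. \<alpha> \<in> {2..m} \<Longrightarrow> is_symmetric (B \<alpha>)"
    and "\<And>\<alpha> \<beta>. \<alpha> \<in> {2..m} \<Longrightarrow> \<beta> \<in> {2..m} \<Longrightarrow> \<alpha> \<noteq> \<beta> \<Longrightarrow> frob_inner (B \<alpha>) (B \<beta>) = 0"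
    and "\<And>\<alpha> \<beta>. \<alpha> \<in> {2..m} \<Longrightarrow> \<beta> \<in> {2..m} \<Longrightarrow> \<alpha> \<le> \<beta> \<Longrightarrow> frob_norm (B \<beta>) \<le> frob_norm (B \<alpha>)"
  shows "(\<Sum>\<alpha>=2..m. (frob_norm (commutator A (B \<alpha>)))^2)
           \<le> (\<Sum>\<alpha>=2..m. (frob_norm (B \<alpha>))^2) + (frob_norm (B 2))^2"
proof (rule sum_frob_norm_commutator_diagonal_le)
  show "pairwise (\<lambda>\<alpha> \<beta>. frob_inner (B \<alpha>) (B \<beta>) = 0) {2..m}"
    using assms(5) by (simp add: pairwise_def)
  show "frob_norm (B \<alpha>) \<le> frob_norm (B 2)" if "\<alpha> \<in> {2..m}" for \<alpha>
    using assms(1,6) that by simp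
qed (use assms(2-4) in auto)

end
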